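(* Let $\mathcal{S}$ be a discrete state space, $\mathcal{A}$ a finite action space, $\mathcal{R}=[-1,1]^{\mathcal{S}\times\mathcal{A}}$, $\Pi$ the set of functions $\mathcal{S}\to\mathcal{A}$, $\mathcal{P}$ the set of planners $p:\mathcal{R}\to\Pi$, and let $\dot\pi\in\Pi$. Let $L$ be a computer language (universal Turing machine) with Kolmogorov complexity $K_L$, let $c\ge0$, and suppose $L$ is $c$-reasonable for $F$, i.e. $$\max_{(p,R)\in\mathcal{P}\times\mathcal{R},\ F_i\in F}\big(K_L(F_i(p,R))-K_L(p,R)\big)\le c.$$ If $(\dot p,\dot R)\in\mathcal{P}\times\mathcal{R}$ is compatible with $\dot\pi$ (i.e.\ $\dot p(\dot R)=\dot\pi$), then $(-\dot p,-\dot R)$ is of comparable complexity to $(\dot p,\dot R)$, i.e. $$\big|K_L(-\dot p,-\dot R)-K_L(\dot p,\dot R)\big|\le c.$$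
   Context: $K_L(x)$ denotes the length of the shortest program in $L$ that generates (a description of) the object $x$. For a planner $p$, $-p$ is the planner $(-p)(R)=p(-R)$; $-R$ is the pointwise negative of $R$. Notation: $0$ is the zero reward; $p_\pi(R)=\pi$ for all $R$; $R_\pi(s,a)=1$ if $\pi(s)=a$ and $0$ otherwise; $p_g(R)(s)=\arg\max_a R(s,a)$. Basic operations: $f_1(p)=(p,0)$; $f_2(R)=(p_g,R)$; $f_3(p,R)=p(R)$; $f_4(p,R)=(-p,-R)$; $f_5(\pi)=p_\pi$; $f_6(\pi)=R_\pi$. The set $F=\{F_1,F_2,F_3,F_4\}$ consists of $F_1=f_1\circ f_5\circ f_3$, $F_2=f_2\circ f_6\circ f_3$, $F_3=f_4\circ f_2\circ f_6\circ f_3$, $F_4=f_4$. *)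

theory Defs
  imports Main "HOL-Library.FuncSet" "HOL-Library.Extended_Real"
begin

type_synonym ('s,'a) reward = "'s \<times> 'a \<Rightarrow> real"
type_synonym ('s,'a) policy = "'s \<Rightarrow> 'a"
text \<open>Planners are functions R -> Pi, represented extensionally on the reward space.\<close>
type_synonym ('s,'a) planner = "('s,'a) reward \<Rightarrow> ('s,'a) policy"

definition Rspace :: "('s,'a) reward set" where
  "Rspace = {R. \<forall>x. R x \<in> {-1..1}}"

definition Planners :: "('s,'a) planner set" where
  "Planners = (Rspace \<rightarrow>\<^sub>E (UNIV :: ('s,'a) policy set))"

definition neg_reward :: "('s,'a) reward \<Rightarrow> ('s,'a) reward" where
  "neg_reward R = (\<lambda>x. - R x)"

definition neg_planner :: "('s,'a) planner \<Rightarrow> ('s,'a) planner" where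
  "neg_planner p = restrict (\<lambda>R. p (neg_reward R)) Rspace"

definition zero_reward :: "('s,'a) reward" where
  "zero_reward = (\<lambda>x. 0)"

definition const_planner :: "('s,'a) policy \<Rightarrow> ('s,'a) planner" where
  "const_planner \<pi> = restrict (\<lambda>R. \<pi>) Rspace"

definition policy_reward :: "('s,'a) policy \<Rightarrow> ('s,'a) reward" where
  "policy_reward \<pi> = (\<lambda>(s,a). if \<pi> s = a then 1 else 0)"

definition greedy_planner :: "('s,'a::finite) planner" where
  "greedy_planner = restrict (\<lambda>R s. SOME a. \<forall>b. R (s,b) \<le> R (s,a)) Rspace"

definition f1 :: "('s,'a) planner \<Rightarrow> ('s,'a) planner \<times> ('s,'a) reward" where
  "f1 p = (p, zero_reward)"
definition f2 :: "('s,'a::finite) reward \<Rightarrow> ('s,'a) planner \<times> ('s,'a) reward" where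
  "f2 R = (greedy_planner, R)"
definition f3 :: "('s,'a) planner \<times> ('s,'a) reward \<Rightarrow> ('s,'a) policy" where
  "f3 pR = fst pR (snd pR)"
definition f4 :: "('s,'a) planner \<times> ('s,'a) reward \<Rightarrow> ('s,'a) planner \<times> ('s,'a) reward" where
  "f4 pR = (neg_planner (fst pR), neg_reward (snd pR))"
definition f5 :: "('s,'a) policy \<Rightarrow> ('s,'a) planner" where
  "f5 \<pi> = const_planner \<pi>"
definition f6 :: "('s,'a) policy \<Rightarrow> ('s,'a) reward" where
  "f6 \<pi> = policy_reward \<pi>"

definition F1 where "F1 = f1 \<circ> f5 \<circ> f3"
definition F2 where "F2 = f2 \<circ> f6 \<circ> f3"
definition F3 where "F3 = f4 \<circ> f2 \<circ> f6 \<circ> f3"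
definition F4 where "F4 = f4"

definition Fset :: "(('s,'a::finite) planner \<times> ('s,'a) reward \<Rightarrow> ('s,'a) planner \<times> ('s,'a) reward) set" where
  "Fset = {F1, F2, F3, F4}"

text \<open>A computer language L is modelled as a partial decoder from binary programs to
  the objects they generate (planner-reward pairs).\<close>
type_synonym ('s,'a) language = "bool list \<Rightarrow> (('s,'a) planner \<times> ('s,'a) reward) option"

definition K :: "('s,'a) language \<Rightarrow> ('s,'a) planner \<times> ('s,'a) reward \<Rightarrow> enat" where
  "K L x = (if \<exists>q. L q = Some x
            then enat (LEAST n. \<exists>q. L q = Some x \<and> length q = n) else \<infinity>)"

definition reasonable :: "('s,'a::finite) language \<Rightarrow> real \<Rightarrow> bool" where
  "reasonable L c \<longleftrightarrow> (\<forall>p\<in>Planners. \<forall>R\<in>Rspace. \<forall>F\<in>Fset.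
      ereal_of_enat (K L (F (p,R))) \<le> ereal_of_enat (K L (p,R)) + ereal c)"

end

theory Submission
  imports Defs
begin

(* Negation is an involution on planner-reward pairs, and F4 is that negation. Reasonableness
   for F4 bounds the complexity of the negated pair by that of the pair, and applying the same
   bound to the negated pair gives the converse inequality. *)

lemma neg_reward_in_Rspace: "R \<in> Rspace \<Longrightarrow> neg_reward R \<in> Rspace"
  by (auto simp: Rspace_def neg_reward_def)

lemma neg_reward_neg_reward [simp]: "neg_reward (neg_reward R) = R"
  by (simp add: neg_reward_def)

lemma neg_planner_in_Planners: "neg_planner p \<in> Planners"
  by (simp add: Planners_def neg_planner_def)

lemma neg_planner_neg_planner:
  assumes "p \<in> Planners"
  shows "neg_planner (neg_planner p) = p"
proof
  fix R
  show "neg_planner (neg_planner p) R = p R"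
  proof (cases "R \<in> Rspace")
    case True
    then show ?thesis by (simp add: neg_planner_def neg_reward_in_Rspace)
  next
    case False
    then show ?thesis using assms by (auto simp: neg_planner_def Planners_def)
  qed
qed

lemma reasonable_neg_bound:
  fixes L :: "('s,'a::finite) language"
  assumes "reasonable L c" and "p \<in> Planners" and "R \<in> Rspace"
  shows "ereal_of_enat (K L (neg_planner p, neg_reward R)) \<le> ereal_of_enat (K L (p, R)) + ereal c"
proof -
  have "F4 \<in> (Fset :: (('s,'a) planner \<times> ('s,'a) reward \<Rightarrow> _) set)"
    by (simp add: Fset_def)
  then show ?thesis
    using assms unfolding reasonable_def by (fastforce simp: F4_def f4_def)
qed

theorem proposition4:
  fixes L :: "('s,'a::finite) language" and c :: real
    and p :: "('s,'a) planner" and R :: "('s,'a) reward" and \<pi> :: "('s,'a) policy"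
  assumes "c \<ge> 0"
    and "reasonable L c"
    and "p \<in> Planners" and "R \<in> Rspace"
    and "p R = \<pi>"
  shows "ereal_of_enat (K L (neg_planner p, neg_reward R)) \<le> ereal_of_enat (K L (p, R)) + ereal c
       \<and> ereal_of_enat (K L (p, R)) \<le> ereal_of_enat (K L (neg_planner p, neg_reward R)) + ereal c"
proof
  show "ereal_of_enat (K L (neg_planner p, neg_reward R)) \<le> ereal_of_enat (K L (p, R)) + ereal c"
    using reasonable_neg_bound assms(2-4) .
  show "ereal_of_enat (K L (p, R)) \<le> ereal_of_enat (K L (neg_planner p, neg_reward R)) + ereal c"
    using reasonable_neg_bound[OF assms(2) neg_planner_in_Planners[of p] neg_reward_in_Rspace[OF assms(4)]]
    unfolding neg_planner_neg_planner[OF assms(3)] neg_reward_neg_reward .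
qed

end
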